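(* Consider the stationary mean field model with scalar interaction described in the context, with finite state space $X$. Suppose that (a) for every $m\in[a,b]$ the optimal policy correspondence $G(\cdot,m)$ is single-valued, with unique selection $g(\cdot,m)$; and (b) for every $m\in[a,b]$ the Markov chain $L_{m,g}$ on $X$ is irreducible and aperiodic, so that it has a unique invariant distribution $s^{m,g}$. Define $f:[a,b]\to\mathbb{R}$ by $f(m)=m-M(s^{m,g})$. Run the following bisection procedure (Adaptive Value Function Iteration): set $a_1=a$, $b_1=b$; at iteration $t$, set $m_t=(a_t+b_t)/2$, compute the value function $V(\cdot,m_t)$ (e.g. by value iteration), the optimal policy $g_t=g(\cdot,m_t)$, and the unique invariant distribution $s^{m_t,g_t}$ of $L_{m_t,g_t}$; evaluate $f(m_t)=m_t-M(s^{m_t,g_t})$; if $f(m_t)=0$ stop; if $f(m_t)>0$ set $b_{t+1}=m_t,\ a_{t+1}=a_t$; if $f(m_t)<0$ set $a_{t+1}=m_t,\ b_{t+1}=b_t$. Then the sequence $\{m_t\}$ converges to some $m^*\in[a,b]$ with $f(m^* )=0$ (if the procedure stops at a finite $t$, take $m^*=m_t$), and the pair consisting of the policy $g^*=g(\cdot,m^* )$ and the population state $s^{m^*,g^*}$ constitutes a mean field equilibrium.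
   Context: Model. $X$ is a finite set of individual states; $\mathcal{P}(X)$ is the set of probability measures on $X$ (population states). $A\subseteq\mathbb{R}^q$ is the action set and $\Gamma:X\to 2^A$ is a nonempty compact-valued continuous (upper and lower hemicontinuous) feasibility correspondence. The scalar interaction function $M:\mathcal{P}(X)\to[a,b]$ is continuous, with known bounds $a<b$. Idiosyncratic shocks $\zeta$ are i.i.d. with law $q$ on a compact separable metric space $E$. The transition function $w:X\times A\times[a,b]\times E\to X$ is continuous: an agent in state $x$ taking action $a'$ when the scalar interaction is $m$ moves to $w(x,a',m,\zeta)$. The one-period payoff $\pi:X\times A\times[a,b]\to\mathbb{R}$ is bounded and continuous, and $\beta\in(0,1)$ is the discount factor. For fixed $m\in[a,b]$, $V(x,m)$ is the supremum over (history-dependent, feasible) policies of the expected discounted payoff $\mathbb{E}\sum_{t\ge1}\beta^{t-1}\pi(x(t),a(t),m)$ from initial state $x$; it satisfies the Bellman equation $V(x,m)=\max_{a'\in\Gamma(x)}\{\pi(x,a',m)+\beta\int_E V(w(x,a',m,\zeta),m)\,q(d\zeta)\}$. The optimal policy correspondence is $G(x,m)=\arg\max_{a'\in\Gamma(x)}\{\pi(x,a',m)+\beta\int_E V(w(x,a',m,\zeta),m)\,q(d\zeta)\}$. For a stationary policy $g(x,m)$ and $m\in[a,b]$, $L_{m,g}(x,y)=q(\{\zeta: w(x,g(x,m),m,\zeta)=y\})$. Mean field equilibrium (MFE): a stationary policy $g$ and $s\in\mathcal{P}(X)$ such that (1) $g(x,M(s))\in G(x,M(s))$ for all $x$, and (2)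 $s(y)=\sum_{x\in X}L_{M(s),g}(x,y)s(x)$ for all $y\in X$. *)

theory Defs
  imports "HOL-Analysis.Analysis" "HOL-Probability.Probability"
begin

definition prob_vec :: "real^'x::finite \<Rightarrow> bool" where
  "prob_vec s \<longleftrightarrow> (\<forall>x. 0 \<le> s $ x) \<and> (\<Sum>x\<in>UNIV. s $ x) = 1"

definition pop_states :: "(real^'x::finite) set" where
  "pop_states = {s. prob_vec s}"

text \<open>Expected discounted payoff over the first n periods, from history h
  (list of states visited so far, last element = current state), when following
  the history-dependent (deterministic) policy sigma and the interaction is m.\<close>
fun J :: "('x \<Rightarrow> 'a \<Rightarrow> real \<Rightarrow> real) \<Rightarrow> ('x \<Rightarrow> 'a \<Rightarrow> real \<Rightarrow> 'e \<Rightarrow> 'x)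
          \<Rightarrow> 'e measure \<Rightarrow> real \<Rightarrow> real \<Rightarrow> nat \<Rightarrow> ('x list \<Rightarrow> 'a) \<Rightarrow> 'x list \<Rightarrow> real" where
  "J payoff w q beta m 0 \<sigma> h = 0"
| "J payoff w q beta m (Suc n) \<sigma> h =
     payoff (last h) (\<sigma> h) m
     + beta * (\<integral>\<zeta>. J payoff w q beta m n \<sigma> (h @ [w (last h) (\<sigma> h) m \<zeta>]) \<partial>q)"

definition feasible_policy :: "('x \<Rightarrow> 'a set) \<Rightarrow> ('x list \<Rightarrow> 'a) \<Rightarrow> bool" where
  "feasible_policy \<Gamma> \<sigma> \<longleftrightarrow> (\<forall>h. h \<noteq> [] \<longrightarrow> \<sigma> h \<in> \<Gamma> (last h))"

definition V :: "('x \<Rightarrow> 'a \<Rightarrow> real \<Rightarrow> real) \<Rightarrow> ('x \<Rightarrow> 'a \<Rightarrow> real \<Rightarrow> 'e \<Rightarrow> 'x)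
          \<Rightarrow> 'e measure \<Rightarrow> real \<Rightarrow> ('x \<Rightarrow> 'a set) \<Rightarrow> 'x \<Rightarrow> real \<Rightarrow> real" where
  "V payoff w q beta \<Gamma> x m =
     (SUP \<sigma>\<in>{\<sigma>. feasible_policy \<Gamma> \<sigma>}. lim (\<lambda>n. J payoff w q beta m n \<sigma> [x]))"

definition G :: "('x \<Rightarrow> 'a \<Rightarrow> real \<Rightarrow> real) \<Rightarrow> ('x \<Rightarrow> 'a \<Rightarrow> real \<Rightarrow> 'e \<Rightarrow> 'x)
          \<Rightarrow> 'e measure \<Rightarrow> real \<Rightarrow> ('x \<Rightarrow> 'a set) \<Rightarrow> 'x \<Rightarrow> real \<Rightarrow> 'a set" where
  "G payoff w q beta \<Gamma> x m =
     (let obj = (\<lambda>a'. payoff x a' m + beta * (\<integral>\<zeta>. V payoff w q beta \<Gamma> (w x a' m \<zeta>) m \<partial>q))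
      in {a'\<in>\<Gamma> x. \<forall>b'\<in>\<Gamma> x. obj b' \<le> obj a'})"

definition L :: "('x \<Rightarrow> 'a \<Rightarrow> real \<Rightarrow> 'e \<Rightarrow> 'x) \<Rightarrow> 'e measure
          \<Rightarrow> ('x \<Rightarrow> real \<Rightarrow> 'a) \<Rightarrow> real \<Rightarrow> 'x \<Rightarrow> 'x \<Rightarrow> real" where
  "L w q g m x y = measure q {\<zeta>\<in>space q. w x (g x m) m \<zeta> = y}"

fun nstep :: "('x::finite \<Rightarrow> 'x \<Rightarrow> real) \<Rightarrow> nat \<Rightarrow> 'x \<Rightarrow> 'x \<Rightarrow> real" where
  "nstep P 0 x y = (if x = y then 1 else 0)"
| "nstep P (Suc n) x y = (\<Sum>z\<in>UNIV. nstep P n x z * P z y)"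

definition irreducible :: "('x::finite \<Rightarrow> 'x \<Rightarrow> real) \<Rightarrow> bool" where
  "irreducible P \<longleftrightarrow> (\<forall>x y. \<exists>n>0. nstep P n x y > 0)"

definition aperiodic :: "('x::finite \<Rightarrow> 'x \<Rightarrow> real) \<Rightarrow> bool" where
  "aperiodic P \<longleftrightarrow> (\<forall>x. Gcd {n. n > 0 \<and> nstep P n x x > 0} = (1::nat))"

definition invariant :: "('x::finite \<Rightarrow> 'x \<Rightarrow> real) \<Rightarrow> real^'x \<Rightarrow> bool" where
  "invariant P s \<longleftrightarrow> (\<forall>y. s $ y = (\<Sum>x\<in>UNIV. P x y * s $ x))"

definition inv_dist :: "('x::finite \<Rightarrow> 'x \<Rightarrow> real) \<Rightarrow> real^'x" where
  "inv_dist P = (THE s. prob_vec s \<and> invariant P s)"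

definition is_MFE :: "('x::finite \<Rightarrow> 'a \<Rightarrow> real \<Rightarrow> real) \<Rightarrow> ('x \<Rightarrow> 'a \<Rightarrow> real \<Rightarrow> 'e \<Rightarrow> 'x)
          \<Rightarrow> 'e measure \<Rightarrow> real \<Rightarrow> ('x \<Rightarrow> 'a set) \<Rightarrow> (real^'x \<Rightarrow> real)
          \<Rightarrow> ('x \<Rightarrow> real \<Rightarrow> 'a) \<Rightarrow> real^'x \<Rightarrow> bool" where
  "is_MFE payoff w q beta \<Gamma> M g s \<longleftrightarrow>
     prob_vec s
     \<and> (\<forall>x. g x (M s) \<in> G payoff w q beta \<Gamma> x (M s))
     \<and> (\<forall>y. s $ y = (\<Sum>x\<in>UNIV. L w q g (M s) x y * s $ x))"

text \<open>Adaptive Value Function Iteration (bisection). bisect f a b t = (a_{t+1}, b_{t+1})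
  (0-based). When f vanishes at the midpoint the interval is left unchanged, so the
  midpoint sequence stays constant from then on (the procedure has stopped).\<close>
fun bisect :: "(real \<Rightarrow> real) \<Rightarrow> real \<Rightarrow> real \<Rightarrow> nat \<Rightarrow> real \<times> real" where
  "bisect f a b 0 = (a, b)"
| "bisect f a b (Suc t) =
     (let (l, u) = bisect f a b t; m = (l + u) / 2 in
      if f m = 0 then (l, u) else if f m > 0 then (l, m) else (m, u))"

definition midpt :: "(real \<Rightarrow> real) \<Rightarrow> real \<Rightarrow> real \<Rightarrow> nat \<Rightarrow> real" where
  "midpt f a b t = (fst (bisect f a b t) + snd (bisect f a b t)) / 2"

end

theory Submission
  imports Defs
begin

(* For fixed m the value function V(.,m) is the supremum of discounted payoffs whose
   n-period truncations converge geometrically and depend on m only through the payoff and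
   the transition probabilities; these are uniformly continuous in m on compact sets, so
   V(x,.) is continuous. Berge's argument (closed graph of the unique maximiser) makes the
   policy g(x,.) continuous, hence the kernel L_{m,g} is continuous in m, and so is its
   unique invariant distribution (again by a closed graph argument). Thus
   f(m) = m - M(s^{m,g}) is continuous with f(a) <= 0 <= f(b), bisection converges to a
   root m*, and M(s^{m*,g}) = m* is exactly the equilibrium condition. *)

lemma abs_sum_mult_weights_le:
  fixes f p :: "'i \<Rightarrow> real"
  assumes "finite S" "\<And>y. y \<in> S \<Longrightarrow> 0 \<le> p y" "(\<Sum>y\<in>S. p y) = 1"
    and "\<And>y. y \<in> S \<Longrightarrow> \<bar>f y\<bar> \<le> c"
  shows "\<bar>\<Sum>y\<in>S. f y * p y\<bar> \<le> c"
proof -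
  have "\<bar>\<Sum>y\<in>S. f y * p y\<bar> \<le> (\<Sum>y\<in>S. \<bar>f y\<bar> * p y)"
    using sum_abs[of "\<lambda>y. f y * p y" S] assms(2) by (simp add: abs_mult)
  also have "\<dots> \<le> (\<Sum>y\<in>S. c * p y)"
    using assms(2,4) by (intro sum_mono mult_right_mono) auto
  also have "\<dots> = c"
    using assms(3) by (simp add: sum_distrib_left[symmetric])
  finally show ?thesis .
qed

lemma convergent_if_abs_diff_le_geometric:
  fixes X :: "nat \<Rightarrow> real"
  assumes "\<And>n. \<bar>X (Suc n) - X n\<bar> \<le> c * r ^ n" "0 \<le> r" "r < 1"
  shows "convergent X"
proof -
  have "summable (\<lambda>n. X (Suc n) - X n)"
    by (rule summable_comparison_test[where g="\<lambda>n. c * r ^ n"])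
       (use assms in \<open>auto intro!: summable_mult summable_geometric\<close>)
  then have "(\<lambda>n. X 0 + (\<Sum>k<n. X (Suc k) - X k)) \<longlonglongrightarrow> X 0 + (\<Sum>k. X (Suc k) - X k)"
    by (intro tendsto_intros summable_LIMSEQ)
  then show ?thesis
    by (auto simp: convergent_def sum_lessThan_telescope)
qed

lemma abs_SUP_diff_le:
  fixes f g :: "'s \<Rightarrow> real"
  assumes "S \<noteq> {}" "\<And>s. s \<in> S \<Longrightarrow> \<bar>f s - g s\<bar> \<le> e"
    and "bdd_above (f ` S)" "bdd_above (g ` S)"
  shows "\<bar>(SUP s\<in>S. f s) - (SUP s\<in>S. g s)\<bar> \<le> e"
proof -
  have "(SUP s\<in>S. f s) \<le> (SUP s\<in>S. g s) + e"
  proof (rule cSUP_least[OF assms(1)])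
    fix s assume "s \<in> S"
    then show "f s \<le> (SUP s\<in>S. g s) + e"
      using assms(2)[of s] cSUP_upper[OF \<open>s \<in> S\<close> assms(4)] unfolding abs_le_iff by linarith
  qed
  moreover have "(SUP s\<in>S. g s) \<le> (SUP s\<in>S. f s) + e"
  proof (rule cSUP_least[OF assms(1)])
    fix s assume "s \<in> S"
    then show "g s \<le> (SUP s\<in>S. f s) + e"
      using assms(2)[of s] cSUP_upper[OF \<open>s \<in> S\<close> assms(3)] unfolding abs_le_iff by linarith
  qed
  ultimately show ?thesis by linarith
qed

lemma uniformly_equicontinuous_finite_family:
  fixes f :: "'i::finite \<Rightarrow> 'a::metric_space \<times> 'b::metric_space \<Rightarrow> 'c::metric_space"
  assumes "\<And>i. compact (S i)" "compact T" "\<And>i. continuous_on (S i \<times> T) (f i)" "e > 0"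
  shows "\<exists>d>0. \<forall>i. \<forall>s\<in>S i. \<forall>t\<in>T. \<forall>t'\<in>T. dist t t' < d \<longrightarrow> dist (f i (s, t)) (f i (s, t')) < e"
proof -
  have "\<forall>\<^sub>F d in at_right 0. \<forall>s\<in>S i. \<forall>t\<in>T. \<forall>t'\<in>T. dist t t' < d \<longrightarrow> dist (f i (s, t)) (f i (s, t')) < e"
    for i
  proof -
    have "uniformly_continuous_on (S i \<times> T) (f i)"
      using assms by (intro compact_uniformly_continuous compact_Times) auto
    then obtain d where "d > 0"
      and d: "\<And>p p'. p \<in> S i \<times> T \<Longrightarrow> p' \<in> S i \<times> T \<Longrightarrow> dist p' p < d \<Longrightarrow> dist (f i p') (f i p) < e"
      unfolding uniformly_continuous_on_def using assms(4) by metis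
    show ?thesis
      unfolding eventually_at_right_field
    proof (intro exI[of _ d] conjI allI impI ballI)
      fix d' s t t' assume "d' < d" "s \<in> S i" "t \<in> T" "t' \<in> T" "dist t t' < d'"
      then show "dist (f i (s, t)) (f i (s, t')) < e"
        using d[of "(s, t')" "(s, t)"] by (simp add: dist_Pair_Pair dist_commute)
    qed fact
  qed
  then have "\<forall>\<^sub>F d in at_right 0. \<forall>i. \<forall>s\<in>S i. \<forall>t\<in>T. \<forall>t'\<in>T. dist t t' < d \<longrightarrow> dist (f i (s, t)) (f i (s, t')) < e"
    by (rule eventually_all_finite)
  then have "\<forall>\<^sub>F d in at_right 0. 0 < d \<and> (\<forall>i. \<forall>s\<in>S i. \<forall>t\<in>T. \<forall>t'\<in>T. dist t t' < d \<longrightarrow> dist (f i (s, t)) (f i (s, t')) < e)"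
    using eventually_at_right_less by (rule eventually_conj[rotated])
  then show ?thesis
    by (rule eventually_happens'[OF trivial_limit_at_right_real])
qed

lemma continuous_on_from_closed_characterization:
  fixes f :: "'a::euclidean_space \<Rightarrow> 'b::euclidean_space"
  assumes "compact C" "closed T" "f \<in> T \<rightarrow> C"
    and h_cont: "\<And>i. i \<in> I \<Longrightarrow> continuous_on (T \<times> C) (h i)"
    and char: "\<And>m c. m \<in> T \<Longrightarrow> c \<in> C \<Longrightarrow> (\<forall>i\<in>I. h i (m, c) \<le> (0::real)) \<longleftrightarrow> c = f m"
  shows "continuous_on T f"
proof (rule continuous_from_closed_graph[OF assms(1,3)])
  have closed_TC: "closed (T \<times> C)"
    using assms(1,2) by (simp add: closed_Times compact_imp_closed)
  have "(\<lambda>m. (m, f m)) ` T = (T \<times> C) \<inter> (\<Inter>i\<in>I. (T \<times> C) \<inter> h i -` {..0})"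
  proof (intro equalityI subsetI)
    fix p assume "p \<in> (\<lambda>m. (m, f m)) ` T"
    then show "p \<in> (T \<times> C) \<inter> (\<Inter>i\<in>I. (T \<times> C) \<inter> h i -` {..0})"
      using char assms(3) by auto
  next
    fix p assume p: "p \<in> (T \<times> C) \<inter> (\<Inter>i\<in>I. (T \<times> C) \<inter> h i -` {..0})"
    then obtain m c where "p = (m, c)" "m \<in> T" "c \<in> C" "\<forall>i\<in>I. h i (m, c) \<le> 0"
      by (cases p) blast
    then show "p \<in> (\<lambda>m. (m, f m)) ` T"
      using char by auto
  qed
  also have "closed \<dots>"
    using closed_TC continuous_closed_preimage[OF h_cont closed_TC closed_atMost]
    by (intro closed_Int closed_INT) auto
  finally show "closed ((\<lambda>m. (m, f m)) ` T)" .
qed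

lemma continuous_on_unique_maximizer:
  fixes g :: "'a::euclidean_space \<Rightarrow> 'b::euclidean_space" and F :: "'b \<times> 'a \<Rightarrow> real"
  assumes "compact C" "closed T" "continuous_on (C \<times> T) F"
    and "\<And>m c. m \<in> T \<Longrightarrow> c \<in> C \<Longrightarrow> (\<forall>c'\<in>C. F (c', m) \<le> F (c, m)) \<longleftrightarrow> c = g m"
    and "g \<in> T \<rightarrow> C"
  shows "continuous_on T g"
proof (rule continuous_on_from_closed_characterization[OF assms(1,2,5)])
  fix c' assume "c' \<in> C"
  have "continuous_on (T \<times> C) (\<lambda>p. F (c', fst p))" "continuous_on (T \<times> C) (\<lambda>p. F (snd p, fst p))"
    using \<open>c' \<in> C\<close> by (auto intro!: continuous_on_compose2[OF assms(3)] continuous_intros)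
  then show "continuous_on (T \<times> C) (\<lambda>p. F (c', fst p) - F (snd p, fst p))"
    by (rule continuous_on_diff)
qed (use assms(4) in auto)

lemma eventually_eq_of_continuous_map_discrete:
  assumes f: "continuous_map (top_of_set S) (discrete_topology UNIV) f"
    and u: "(u \<longlongrightarrow> l) F" "l \<in> S" "\<forall>\<^sub>F n in F. u n \<in> S"
  shows "\<forall>\<^sub>F n in F. f (u n) = f l"
proof -
  have "limitin (top_of_set S) u l F"
    using u by (simp add: limitin_subtopology)
  then have "limitin (discrete_topology UNIV) (f \<circ> u) (f l) F"
    by (rule continuous_map_limit[OF f])
  then show ?thesis
    by (rule limitinD[where U="{f l}", THEN eventually_mono]) auto
qed

lemma open_fibre_of_continuous_map_discrete:
  assumes f: "continuous_map (top_of_set S) (discrete_topology UNIV) f"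
    and \<phi>: "continuous_on UNIV \<phi>" "range \<phi> \<subseteq> S"
  shows "open {\<zeta>. f (\<phi> \<zeta>) = y}"
proof -
  have "continuous_map euclidean (top_of_set S) \<phi>"
    using \<phi> by (auto simp: continuous_map_in_subtopology)
  then have "continuous_map euclidean (discrete_topology UNIV) (f \<circ> \<phi>)"
    using f by (rule continuous_map_compose)
  then have "openin euclidean {\<zeta> \<in> topspace euclidean. (f \<circ> \<phi>) \<zeta> \<in> {y}}"
    by (rule openin_continuous_map_preimage) simp
  then show ?thesis by simp
qed

lemma (in prob_space) integral_finite_valued:
  fixes \<phi> :: "'a \<Rightarrow> 'x::finite"
  assumes "\<And>y. {\<zeta>\<in>space M. \<phi> \<zeta> = y} \<in> events"
  shows "(\<integral>\<zeta>. F (\<phi> \<zeta>) \<partial>M) = (\<Sum>y\<in>UNIV. F y * prob {\<zeta>\<in>space M. \<phi> \<zeta> = y})"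
proof -
  have "(\<integral>\<zeta>. F (\<phi> \<zeta>) \<partial>M) = (\<integral>\<zeta>. (\<Sum>y\<in>UNIV. F y * indicator {\<zeta>\<in>space M. \<phi> \<zeta> = y} \<zeta>) \<partial>M)"
    by (intro Bochner_Integration.integral_cong) (auto simp: indicator_def)
  also have "\<dots> = (\<Sum>y\<in>UNIV. F y * prob {\<zeta>\<in>space M. \<phi> \<zeta> = y})"
    using assms by (subst Bochner_Integration.integral_sum) (auto simp: Int_absorb2 less_top[symmetric])
  finally show ?thesis .
qed

lemma (in prob_space) tendsto_prob_of_eventually_eq:
  assumes "\<And>n. A n \<in> events" "B \<in> events"
    and "\<And>\<zeta>. \<zeta> \<in> space M \<Longrightarrow> \<forall>\<^sub>F n in sequentially. \<zeta> \<in> A n \<longleftrightarrow> \<zeta> \<in> B"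
  shows "(\<lambda>n. prob (A n)) \<longlonglongrightarrow> prob B"
proof -
  have "(\<lambda>n. integral\<^sup>L M (indicator (A n))) \<longlonglongrightarrow> (integral\<^sup>L M (indicator B) :: real)"
  proof (rule integral_dominated_convergence[where w="\<lambda>_. 1"])
    show "AE \<zeta> in M. (\<lambda>n. indicator (A n) \<zeta> :: real) \<longlonglongrightarrow> indicator B \<zeta>"
    proof (rule AE_I2)
      fix \<zeta> assume "\<zeta> \<in> space M"
      then show "(\<lambda>n. indicator (A n) \<zeta> :: real) \<longlonglongrightarrow> indicator B \<zeta>"
        by (intro tendsto_eventually eventually_mono[OF assms(3)]) (auto simp: indicator_def)
    qed
  qed (use assms in auto)
  then show ?thesis using assms(1,2) by (simp add: Int_absorb2 sets.sets_into_space)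
qed

section \<open>Invariant distributions of finite Markov chains\<close>

definition stochastic :: "('x::finite \<Rightarrow> 'x \<Rightarrow> real) \<Rightarrow> bool" where
  "stochastic P \<longleftrightarrow> (\<forall>x y. 0 \<le> P x y) \<and> (\<forall>x. (\<Sum>y\<in>UNIV. P x y) = 1)"

lemma invariantD: "invariant P s \<Longrightarrow> (\<Sum>x\<in>UNIV. P x y * s $ x) = s $ y"
  by (metis invariant_def)

lemma nstep_nonneg: "(\<And>x y. 0 \<le> P x y) \<Longrightarrow> 0 \<le> nstep P n x y"
  by (induction n arbitrary: y) (auto intro!: sum_nonneg)

lemma invariant_nstep:
  assumes "invariant P s"
  shows "s $ y = (\<Sum>x\<in>UNIV. nstep P n x y * s $ x)"
proof (induction n arbitrary: y)
  case 0
  have "(\<Sum>x\<in>UNIV. nstep P 0 x y * s $ x) = (\<Sum>x\<in>UNIV. if x = y then s $ x else 0)"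
    by (intro sum.cong) auto
  then show ?case by simp
next
  case (Suc n)
  have "(\<Sum>x\<in>UNIV. nstep P (Suc n) x y * s $ x) = (\<Sum>x\<in>UNIV. \<Sum>z\<in>UNIV. nstep P n x z * P z y * s $ x)"
    by (simp add: sum_distrib_right)
  also have "\<dots> = (\<Sum>z\<in>UNIV. P z y * (\<Sum>x\<in>UNIV. nstep P n x z * s $ x))"
    by (subst sum.swap) (simp add: sum_distrib_left mult_ac)
  also have "\<dots> = s $ y"
    by (simp add: Suc.IH[symmetric] invariantD[OF assms])
  finally show ?case ..
qed

lemma invariant_nonneg_vanishes:
  assumes P: "\<And>x y. 0 \<le> P x y" "irreducible P"
    and u: "invariant P u" "\<And>x. 0 \<le> u $ x" "u $ x0 = 0"
  shows "u $ y = 0"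
proof -
  obtain n where n: "nstep P n y x0 > 0"
    using P(2) unfolding irreducible_def by blast
  have "nstep P n y x0 * u $ y \<le> (\<Sum>x\<in>UNIV. nstep P n x x0 * u $ x)"
    using nstep_nonneg[of P, OF P(1)] u(2)
    by (intro member_le_sum[where f="\<lambda>x. nstep P n x x0 * u $ x"]) auto
  then have "nstep P n y x0 * u $ y \<le> 0"
    using u(3) by (simp add: invariant_nstep[OF u(1), symmetric])
  then show ?thesis
    using n u(2)[of y] mult_pos_pos[of "nstep P n y x0" "u $ y"] by fastforce
qed

lemma invariant_prob_vec_pos:
  assumes P: "\<And>x y. 0 \<le> P x y" "irreducible P" and s: "prob_vec s" "invariant P s"
  shows "s $ y > 0"
proof (rule ccontr)
  assume "\<not> s $ y > 0"
  moreover have "0 \<le> s $ y"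
    using s(1) by (simp add: prob_vec_def)
  ultimately have "s $ y = 0"
    by linarith
  then have "s $ x = 0" for x
    using s(1) by (intro invariant_nonneg_vanishes[OF P s(2) _ \<open>s $ y = 0\<close>]) (simp add: prob_vec_def)
  then show False
    using s(1) by (simp add: prob_vec_def)
qed

lemma invariant_prob_vec_unique:
  assumes P: "\<And>x y. 0 \<le> P x y" "irreducible P"
    and s: "prob_vec s" "invariant P s" and t: "prob_vec t" "invariant P t"
  shows "s = t"
proof -
  have t_pos: "t $ x > 0" for x
    using invariant_prob_vec_pos[OF P t] .
  txt \<open>With c the least ratio s/t, the vector s - c t is nonnegative, invariant and has a zero.\<close>
  define c where "c = Min (range (\<lambda>x. s $ x / t $ x))"
  have "c \<in> range (\<lambda>x. s $ x / t $ x)"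
    unfolding c_def by (rule Min_in) auto
  then obtain x0 where x0: "c = s $ x0 / t $ x0"
    by auto
  define u where "u = s - c *\<^sub>R t"
  have "invariant P u"
    unfolding invariant_def
  proof
    fix y
    have "(\<Sum>x\<in>UNIV. P x y * u $ x) = (\<Sum>x\<in>UNIV. P x y * s $ x) - c * (\<Sum>x\<in>UNIV. P x y * t $ x)"
      by (simp add: u_def right_diff_distrib sum_subtractf sum_distrib_left mult.left_commute)
    then show "u $ y = (\<Sum>x\<in>UNIV. P x y * u $ x)"
      by (simp add: u_def invariantD[OF s(2)] invariantD[OF t(2)])
  qed
  moreover have "0 \<le> u $ x" for x
    using Min_le[of "range (\<lambda>x. s $ x / t $ x)" "s $ x / t $ x"] t_pos[of x]
    by (simp add: u_def c_def pos_le_divide_eq mult.commute)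
  moreover have "u $ x0 = 0"
    using t_pos[of x0] by (simp add: u_def x0)
  ultimately have "u $ x = 0" for x
    by (rule invariant_nonneg_vanishes[OF P])
  then have s_eq: "s = c *\<^sub>R t"
    by (simp add: u_def vec_eq_iff)
  then have "c = 1"
    using s(1) t(1) by (simp add: prob_vec_def sum_distrib_left[symmetric])
  then show ?thesis
    using s_eq by simp
qed

lemma compact_pop_states: "compact (pop_states :: (real^'x::finite) set)"
proof -
  have "pop_states \<subseteq> cbox (0::real^'x) 1"
  proof
    fix s :: "real^'x" assume "s \<in> pop_states"
    then have "0 \<le> s $ x" "(\<Sum>x\<in>UNIV. s $ x) = 1" for x
      by (auto simp: pop_states_def prob_vec_def)
    then have "0 \<le> s $ i \<and> s $ i \<le> 1" for i
      using member_le_sum[of i UNIV "\<lambda>x. s $ x"] by auto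
    then show "s \<in> cbox 0 1"
      by (simp add: mem_box_cart)
  qed
  moreover have "pop_states = {s::real^'x. \<forall>x. 0 \<le> s $ x} \<inter> {s. (\<Sum>x\<in>UNIV. s $ x) = 1}"
    by (auto simp: pop_states_def prob_vec_def)
  moreover have "closed \<dots>"
    by (intro closed_Int closed_Collect_all closed_Collect_le closed_Collect_eq continuous_intros)
  ultimately show ?thesis
    by (metis bounded_cbox bounded_subset compact_eq_bounded_closed)
qed

lemma convex_pop_states: "convex (pop_states :: (real^'x::finite) set)"
  by (rule convexI)
     (auto simp: pop_states_def prob_vec_def sum.distrib sum_distrib_left[symmetric])

lemma uniform_in_pop_states: "(\<chi> x::'x::finite. 1 / real CARD('x)) \<in> pop_states"
  by (simp add: pop_states_def prob_vec_def)

lemma invariant_prob_vec_exists: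
  fixes P :: "'x::finite \<Rightarrow> 'x \<Rightarrow> real"
  assumes P: "stochastic P"
  shows "\<exists>s. prob_vec s \<and> invariant P s"
proof -
  define T where "T s = (\<chi> y. \<Sum>x\<in>UNIV. P x y * s $ x)" for s :: "real^'x"
  have "continuous_on pop_states T"
    unfolding T_def by (intro continuous_intros)
  moreover have "T \<in> pop_states \<rightarrow> pop_states"
  proof
    fix s :: "real^'x" assume "s \<in> pop_states"
    then have s: "0 \<le> s $ x" "(\<Sum>x\<in>UNIV. s $ x) = 1" for x
      by (auto simp: pop_states_def prob_vec_def)
    have "(\<Sum>y\<in>UNIV. \<Sum>x\<in>UNIV. P x y * s $ x) = (\<Sum>x\<in>UNIV. s $ x * (\<Sum>y\<in>UNIV. P x y))"
      by (subst sum.swap) (simp add: sum_distrib_left mult_ac)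
    then have "(\<Sum>y\<in>UNIV. \<Sum>x\<in>UNIV. P x y * s $ x) = 1"
      using P s by (simp add: stochastic_def)
    moreover have "0 \<le> (\<Sum>x\<in>UNIV. P x y * s $ x)" for y
      using P s(1) unfolding stochastic_def by (intro sum_nonneg mult_nonneg_nonneg) auto
    ultimately show "T s \<in> pop_states"
      by (simp add: T_def pop_states_def prob_vec_def)
  qed
  ultimately obtain s where "s \<in> pop_states" "T s = s"
    using brouwer[OF compact_pop_states convex_pop_states] uniform_in_pop_states by blast
  then show ?thesis
    unfolding T_def pop_states_def invariant_def vec_eq_iff by auto
qed

lemma inv_dist:
  assumes "stochastic P" "irreducible P"
  shows "prob_vec (inv_dist P) \<and> invariant P (inv_dist P)"
    and "prob_vec s \<Longrightarrow> invariant P s \<Longrightarrow> inv_dist P = s"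
proof -
  have P_nonneg: "\<And>x y. 0 \<le> P x y"
    using assms(1) by (simp add: stochastic_def)
  have ex1: "\<exists>!s. prob_vec s \<and> invariant P s"
    using invariant_prob_vec_exists[OF assms(1)] invariant_prob_vec_unique[OF P_nonneg assms(2)]
    by blast
  show "prob_vec (inv_dist P) \<and> invariant P (inv_dist P)"
    unfolding inv_dist_def by (rule theI'[OF ex1])
  show "prob_vec s \<Longrightarrow> invariant P s \<Longrightarrow> inv_dist P = s"
    unfolding inv_dist_def by (rule the1_equality[OF ex1]) auto
qed

lemma continuous_on_inv_dist:
  fixes P :: "'m::euclidean_space \<Rightarrow> 'x::finite \<Rightarrow> 'x \<Rightarrow> real"
  assumes "closed T" and P_cont: "\<And>x y. continuous_on T (\<lambda>m. P m x y)"
    and P_stoch: "\<And>m. m \<in> T \<Longrightarrow> stochastic (P m)" and P_irred: "\<And>m. m \<in> T \<Longrightarrow> irreducible (P m)"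
  shows "continuous_on T (\<lambda>m. inv_dist (P m))"
proof (rule continuous_on_from_closed_characterization[OF compact_pop_states \<open>closed T\<close>,
      where I=UNIV and h="\<lambda>y p. \<bar>snd p $ y - (\<Sum>x\<in>UNIV. P (fst p) x y * snd p $ x)\<bar>"])
  show "(\<lambda>m. inv_dist (P m)) \<in> T \<rightarrow> pop_states"
    using inv_dist(1)[OF P_stoch P_irred] by (simp add: pop_states_def)
  show "continuous_on (T \<times> pop_states) (\<lambda>p. \<bar>snd p $ y - (\<Sum>x\<in>UNIV. P (fst p) x y * snd p $ x)\<bar>)" for y
    by (intro continuous_intros continuous_on_compose2[OF P_cont]) auto
  show "(\<forall>y\<in>UNIV. \<bar>snd (m, s) $ y - (\<Sum>x\<in>UNIV. P (fst (m, s)) x y * snd (m, s) $ x)\<bar> \<le> 0)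
      \<longleftrightarrow> s = inv_dist (P m)"
    if "m \<in> T" "s \<in> pop_states" for m s
    using inv_dist(1)[OF P_stoch[OF \<open>m \<in> T\<close>] P_irred[OF \<open>m \<in> T\<close>]]
      inv_dist(2)[OF P_stoch[OF \<open>m \<in> T\<close>] P_irred[OF \<open>m \<in> T\<close>], of s] that
    by (auto simp: invariant_def pop_states_def)
qed

section \<open>Bisection\<close>

lemma bisect_bracket:
  assumes "a \<le> b" "f a \<le> 0" "0 \<le> f b"
  shows "a \<le> fst (bisect f a b t) \<and> fst (bisect f a b t) \<le> snd (bisect f a b t) \<and> snd (bisect f a b t) \<le> b
         \<and> f (fst (bisect f a b t)) \<le> 0 \<and> 0 \<le> f (snd (bisect f a b t))"
proof (induction t)
  case 0
  then show ?case using assms by simp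
next
  case (Suc t)
  then show ?case
    by (cases "bisect f a b t") (auto simp: Let_def not_less)
qed

lemma bisect_Suc_mono:
  assumes "fst (bisect f a b t) \<le> snd (bisect f a b t)"
  shows "fst (bisect f a b t) \<le> fst (bisect f a b (Suc t)) \<and> snd (bisect f a b (Suc t)) \<le> snd (bisect f a b t)"
  using assms by (cases "bisect f a b t") (auto simp: Let_def)

lemma bisect_Suc_width:
  assumes "f (midpt f a b t) \<noteq> 0"
  shows "snd (bisect f a b (Suc t)) - fst (bisect f a b (Suc t)) = (snd (bisect f a b t) - fst (bisect f a b t)) / 2"
  using assms by (cases "bisect f a b t") (auto simp: midpt_def Let_def field_simps)

lemma bisect_stays_at_root:
  assumes "f (midpt f a b t) = 0"
  shows "bisect f a b (t + k) = bisect f a b t"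
  by (induction k) (use assms in \<open>auto simp: midpt_def Let_def split: prod.splits\<close>)

lemma bisect_width:
  assumes "\<forall>t. f (midpt f a b t) \<noteq> 0"
  shows "snd (bisect f a b t) - fst (bisect f a b t) = (b - a) / 2 ^ t"
proof (induction t)
  case (Suc t)
  have "snd (bisect f a b (Suc t)) - fst (bisect f a b (Suc t)) = (snd (bisect f a b t) - fst (bisect f a b t)) / 2"
    using assms by (intro bisect_Suc_width) blast
  also have "\<dots> = (b - a) / 2 ^ Suc t"
    by (simp only: Suc.IH) simp
  finally show ?case .
qed simp

lemma bisect_midpt_tendsto_root_if_hit:
  assumes "a \<le> b" "f a \<le> 0" "0 \<le> f b" and root: "f (midpt f a b T) = 0"
  shows "\<exists>r\<in>{a..b}. midpt f a b \<longlonglongrightarrow> r \<and> f r = 0"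
proof -
  have "\<forall>\<^sub>F t in sequentially. midpt f a b t = midpt f a b T"
    unfolding eventually_sequentially
    by (metis bisect_stays_at_root[of f a b T, OF root] le_add_diff_inverse midpt_def)
  then have "midpt f a b \<longlonglongrightarrow> midpt f a b T"
    by (rule tendsto_eventually)
  moreover have "midpt f a b T \<in> {a..b}"
    using bisect_bracket[OF assms(1-3), of T] by (simp add: midpt_def)
  ultimately show ?thesis
    using root by blast
qed

lemma bisect_midpt_tendsto_root_if_no_hit:
  fixes f :: "real \<Rightarrow> real"
  assumes f_cont: "continuous_on {a..b} f" and "a \<le> b" "f a \<le> 0" "0 \<le> f b"
    and no_hit: "\<forall>t. f (midpt f a b t) \<noteq> 0"
  shows "\<exists>r\<in>{a..b}. midpt f a b \<longlonglongrightarrow> r \<and> f r = 0"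
proof -
  define l where "l t = fst (bisect f a b t)" for t
  define u where "u t = snd (bisect f a b t)" for t
  have bracket: "a \<le> l t" "l t \<le> u t" "u t \<le> b" "f (l t) \<le> 0" "0 \<le> f (u t)" for t
    using bisect_bracket[OF assms(2-4), of t] unfolding l_def u_def by auto
  have "incseq l"
    using bisect_Suc_mono bracket(2) by (auto intro!: incseq_SucI simp: l_def u_def)
  then obtain r where l_lim: "l \<longlonglongrightarrow> r"
    using bracket(2,3) incseq_convergent[of l b] by (meson order_trans)
  have "(\<lambda>t. l t + (b - a) / 2 ^ t) \<longlonglongrightarrow> r + 0"
    by (intro tendsto_add l_lim LIMSEQ_divide_realpow_zero) simp
  moreover have "u = (\<lambda>t. l t + (b - a) / 2 ^ t)"
    using bisect_width[OF no_hit] by (auto simp: l_def u_def algebra_simps)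
  ultimately have u_lim: "u \<longlonglongrightarrow> r"
    by simp
  have in_ab: "l t \<in> {a..b}" "u t \<in> {a..b}" for t
    using bracket(1-3)[of t] by auto
  have r_in: "r \<in> {a..b}"
    using closed_sequentially[OF closed_atLeastAtMost _ l_lim] in_ab by blast
  have "(\<lambda>t. f (l t)) \<longlonglongrightarrow> f r" "(\<lambda>t. f (u t)) \<longlonglongrightarrow> f r"
    using in_ab r_in by (auto intro!: continuous_on_tendsto_compose[OF f_cont] l_lim u_lim)
  then have root: "f r = 0"
    using bracket(4,5) LIMSEQ_le_const2 LIMSEQ_le_const by (metis order.antisym)
  have "(\<lambda>t. (l t + u t) / 2) \<longlonglongrightarrow> (r + r) / 2"
    by (intro tendsto_divide tendsto_add l_lim u_lim tendsto_const) simp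
  then have "midpt f a b \<longlonglongrightarrow> r"
    by (simp add: midpt_def[abs_def] l_def u_def)
  then show ?thesis
    using r_in root by blast
qed

lemma bisect_midpt_tendsto_root:
  fixes f :: "real \<Rightarrow> real"
  assumes "continuous_on {a..b} f" "a \<le> b" "f a \<le> 0" "0 \<le> f b"
  shows "\<exists>r\<in>{a..b}. midpt f a b \<longlonglongrightarrow> r \<and> f r = 0"
  using bisect_midpt_tendsto_root_if_hit[OF assms(2-4)] bisect_midpt_tendsto_root_if_no_hit[OF assms]
  by blast

section \<open>Transition probabilities\<close>

locale finite_noise_dynamics =
  fixes A :: "'a::euclidean_space set"
    and a b :: real
    and q :: "'e::metric_space measure"
    and w :: "'x::finite \<Rightarrow> 'a \<Rightarrow> real \<Rightarrow> 'e \<Rightarrow> 'x"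
  assumes q_prob: "prob_space q"
    and q_sets: "sets q = sets borel"
    and w_cont: "\<forall>x. continuous_map (top_of_set (A \<times> {a..b} \<times> UNIV)) (discrete_topology UNIV)
                        (\<lambda>(a', m, \<zeta>). w x a' m \<zeta>)"
begin

sublocale q: prob_space q
  by (rule q_prob)

definition trans_prob :: "'x \<Rightarrow> 'a \<Rightarrow> real \<Rightarrow> 'x \<Rightarrow> real" where
  "trans_prob x a' m y = measure q {\<zeta>\<in>space q. w x a' m \<zeta> = y}"

lemma w_fibre_in_sets:
  assumes "a' \<in> A" "m \<in> {a..b}"
  shows "{\<zeta>\<in>space q. w x a' m \<zeta> = y} \<in> sets q"
proof -
  have "open {\<zeta>. (\<lambda>(a', m, \<zeta>). w x a' m \<zeta>) ((\<lambda>\<zeta>. (a', m, \<zeta>)) \<zeta>) = y}"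
    using assms by (intro open_fibre_of_continuous_map_discrete[OF w_cont[rule_format]] continuous_intros) auto
  then show ?thesis
    using sets_eq_imp_space_eq[OF q_sets] by (simp add: q_sets)
qed

lemma integral_w_eq_sum:
  assumes "a' \<in> A" "m \<in> {a..b}"
  shows "(\<integral>\<zeta>. F (w x a' m \<zeta>) \<partial>q) = (\<Sum>y\<in>UNIV. F y * trans_prob x a' m y)"
  unfolding trans_prob_def using w_fibre_in_sets[OF assms] by (rule q.integral_finite_valued)

lemma trans_prob_nonneg: "0 \<le> trans_prob x a' m y"
  by (simp add: trans_prob_def)

lemma sum_trans_prob:
  assumes "a' \<in> A" "m \<in> {a..b}"
  shows "(\<Sum>y\<in>UNIV. trans_prob x a' m y) = 1"
  using integral_w_eq_sum[OF assms, of "\<lambda>_. 1"] by (simp add: q.prob_space)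

lemma abs_sum_mult_trans_prob_le:
  assumes "a' \<in> A" "m \<in> {a..b}" "\<And>y. \<bar>f y\<bar> \<le> c"
  shows "\<bar>\<Sum>y\<in>UNIV. f y * trans_prob x a' m y\<bar> \<le> c"
  using assms by (intro abs_sum_mult_weights_le) (auto simp: trans_prob_nonneg sum_trans_prob)

lemma continuous_on_trans_prob: "continuous_on (A \<times> {a..b}) (\<lambda>(a', m). trans_prob x a' m y)"
proof (rule continuous_on_sequentiallyI)
  fix u p assume u: "\<forall>n. u n \<in> A \<times> {a..b}" and p: "p \<in> A \<times> {a..b}" and lim: "u \<longlonglongrightarrow> p"
  have w_eventually: "\<forall>\<^sub>F n in sequentially. w x (fst (u n)) (snd (u n)) \<zeta> = w x (fst p) (snd p) \<zeta>"
    for \<zeta>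
  proof -
    have "(\<lambda>n. (fst (u n), snd (u n), \<zeta>)) \<longlonglongrightarrow> (fst p, snd p, \<zeta>)"
      using lim by (intro tendsto_Pair tendsto_fst tendsto_snd tendsto_const)
    moreover have "(fst p, snd p, \<zeta>) \<in> A \<times> {a..b} \<times> UNIV"
      using p by (simp add: mem_Times_iff)
    moreover have "\<forall>\<^sub>F n in sequentially. (fst (u n), snd (u n), \<zeta>) \<in> A \<times> {a..b} \<times> UNIV"
      using u by (simp add: mem_Times_iff)
    ultimately have "\<forall>\<^sub>F n in sequentially. (\<lambda>(a', m, \<zeta>). w x a' m \<zeta>) (fst (u n), snd (u n), \<zeta>)
        = (\<lambda>(a', m, \<zeta>). w x a' m \<zeta>) (fst p, snd p, \<zeta>)"
      by (rule eventually_eq_of_continuous_map_discrete[OF w_cont[rule_format]])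
    then show ?thesis
      by simp
  qed
  have "\<forall>\<^sub>F n in sequentially. \<zeta> \<in> {\<zeta>\<in>space q. w x (fst (u n)) (snd (u n)) \<zeta> = y}
      \<longleftrightarrow> \<zeta> \<in> {\<zeta>\<in>space q. w x (fst p) (snd p) \<zeta> = y}" for \<zeta>
    by (rule eventually_mono[OF w_eventually[of \<zeta>]]) simp
  moreover have "{\<zeta>\<in>space q. w x (fst (u n)) (snd (u n)) \<zeta> = y} \<in> sets q" for n
    using u by (intro w_fibre_in_sets) (auto simp: mem_Times_iff)
  moreover have "{\<zeta>\<in>space q. w x (fst p) (snd p) \<zeta> = y} \<in> sets q"
    using p by (intro w_fibre_in_sets) (auto simp: mem_Times_iff)
  ultimately have "(\<lambda>n. measure q {\<zeta>\<in>space q. w x (fst (u n)) (snd (u n)) \<zeta> = y})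
      \<longlonglongrightarrow> measure q {\<zeta>\<in>space q. w x (fst p) (snd p) \<zeta> = y}"
    by (intro q.tendsto_prob_of_eventually_eq)
  then show "(\<lambda>n. (\<lambda>(a', m). trans_prob x a' m y) (u n)) \<longlonglongrightarrow> (\<lambda>(a', m). trans_prob x a' m y) p"
    by (simp add: trans_prob_def case_prod_beta)
qed

end

section \<open>Continuity of the value function\<close>

locale discounted_control = finite_noise_dynamics A a b q w
  for A :: "'a::euclidean_space set"
    and a b :: real
    and q :: "'e::metric_space measure"
    and w :: "'x::finite \<Rightarrow> 'a \<Rightarrow> real \<Rightarrow> 'e \<Rightarrow> 'x" +
  fixes \<Gamma> :: "'x \<Rightarrow> 'a set"
    and payoff :: "'x \<Rightarrow> 'a \<Rightarrow> real \<Rightarrow> real"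
    and beta :: real
  assumes Gamma: "\<forall>x. \<Gamma> x \<noteq> {} \<and> compact (\<Gamma> x) \<and> \<Gamma> x \<subseteq> A"
    and pi_bounded: "\<exists>B. \<forall>x a' m. a' \<in> A \<longrightarrow> m \<in> {a..b} \<longrightarrow> \<bar>payoff x a' m\<bar> \<le> B"
    and pi_cont: "\<forall>x. continuous_on (A \<times> {a..b}) (\<lambda>(a', m). payoff x a' m)"
    and beta: "0 < beta" "beta < 1"
begin

definition payoff_bound :: real where
  "payoff_bound = (SOME B. 0 \<le> B \<and> (\<forall>x a' m. a' \<in> A \<longrightarrow> m \<in> {a..b} \<longrightarrow> \<bar>payoff x a' m\<bar> \<le> B))"

lemma
  shows payoff_bound_nonneg: "0 \<le> payoff_bound"
    and abs_payoff_le: "a' \<in> A \<Longrightarrow> m \<in> {a..b} \<Longrightarrow> \<bar>payoff x a' m\<bar> \<le> payoff_bound"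
proof -
  obtain B where "\<forall>x a' m. a' \<in> A \<longrightarrow> m \<in> {a..b} \<longrightarrow> \<bar>payoff x a' m\<bar> \<le> B"
    using pi_bounded by blast
  then have "\<exists>B. 0 \<le> B \<and> (\<forall>x a' m. a' \<in> A \<longrightarrow> m \<in> {a..b} \<longrightarrow> \<bar>payoff x a' m\<bar> \<le> B)"
    by (intro exI[of _ "max B 0"]) (auto simp: le_max_iff_disj)
  from someI_ex[OF this] show "0 \<le> payoff_bound" "a' \<in> A \<Longrightarrow> m \<in> {a..b} \<Longrightarrow> \<bar>payoff x a' m\<bar> \<le> payoff_bound"
    unfolding payoff_bound_def by blast+
qed

lemma feasible_action_in_A: "feasible_policy \<Gamma> \<sigma> \<Longrightarrow> h \<noteq> [] \<Longrightarrow> \<sigma> h \<in> A"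
  using Gamma unfolding feasible_policy_def by blast

lemma feasible_policy_exists: "\<exists>\<sigma>. feasible_policy \<Gamma> \<sigma>"
proof -
  have "feasible_policy \<Gamma> (\<lambda>h. SOME a'. a' \<in> \<Gamma> (last h))"
    unfolding feasible_policy_def using Gamma by (auto simp: some_in_eq)
  then show ?thesis by blast
qed

abbreviation horizon_payoff :: "real \<Rightarrow> nat \<Rightarrow> ('x list \<Rightarrow> 'a) \<Rightarrow> 'x list \<Rightarrow> real" where
  "horizon_payoff m n \<sigma> h \<equiv> J payoff w q beta m n \<sigma> h"

lemma horizon_payoff_Suc:
  assumes "feasible_policy \<Gamma> \<sigma>" "h \<noteq> []" "m \<in> {a..b}"
  shows "horizon_payoff m (Suc n) \<sigma> h = payoff (last h) (\<sigma> h) m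
           + beta * (\<Sum>y\<in>UNIV. horizon_payoff m n \<sigma> (h @ [y]) * trans_prob (last h) (\<sigma> h) m y)"
  using integral_w_eq_sum[OF feasible_action_in_A[OF assms(1,2)] assms(3),
      of "\<lambda>y. horizon_payoff m n \<sigma> (h @ [y])" "last h"]
  by simp

lemma abs_horizon_payoff_le:
  assumes "feasible_policy \<Gamma> \<sigma>" "h \<noteq> []" "m \<in> {a..b}"
  shows "\<bar>horizon_payoff m n \<sigma> h\<bar> \<le> payoff_bound / (1 - beta)"
  using assms(2)
proof (induction n arbitrary: h)
  case 0
  show ?case
    using payoff_bound_nonneg beta(2) by simp
next
  case (Suc n)
  have a_in_A: "\<sigma> h \<in> A"
    using feasible_action_in_A[OF assms(1) Suc.prems] .
  have "\<bar>\<Sum>y\<in>UNIV. horizon_payoff m n \<sigma> (h @ [y]) * trans_prob (last h) (\<sigma> h) m y\<bar>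
      \<le> payoff_bound / (1 - beta)"
    using Suc.IH by (intro abs_sum_mult_trans_prob_le[OF a_in_A assms(3)]) simp
  then have "\<bar>beta * (\<Sum>y\<in>UNIV. horizon_payoff m n \<sigma> (h @ [y]) * trans_prob (last h) (\<sigma> h) m y)\<bar>
      \<le> beta * (payoff_bound / (1 - beta))"
    using beta(1) by (simp only: abs_mult abs_of_pos mult_left_mono less_imp_le)
  then have "\<bar>horizon_payoff m (Suc n) \<sigma> h\<bar> \<le> payoff_bound + beta * (payoff_bound / (1 - beta))"
    unfolding horizon_payoff_Suc[OF assms(1) Suc.prems assms(3)]
    using abs_payoff_le[OF a_in_A assms(3)]
    by (intro order_trans[OF abs_triangle_ineq add_mono])
  also have "\<dots> = payoff_bound / (1 - beta)"
    using beta by (simp add: field_simps)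
  finally show ?case .
qed

lemma abs_horizon_payoff_Suc_diff_le:
  assumes "feasible_policy \<Gamma> \<sigma>" "h \<noteq> []" "m \<in> {a..b}"
  shows "\<bar>horizon_payoff m (Suc n) \<sigma> h - horizon_payoff m n \<sigma> h\<bar> \<le> payoff_bound * beta ^ n"
  using assms(2)
proof (induction n arbitrary: h)
  case 0
  then show ?case
    using abs_payoff_le[OF feasible_action_in_A[OF assms(1) 0] assms(3)]
      horizon_payoff_Suc[OF assms(1) 0 assms(3), of 0] by simp
next
  case (Suc n)
  have a_in_A: "\<sigma> h \<in> A"
    using feasible_action_in_A[OF assms(1) Suc.prems] .
  let ?D = "\<lambda>y. horizon_payoff m (Suc n) \<sigma> (h @ [y]) - horizon_payoff m n \<sigma> (h @ [y])"
  have "horizon_payoff m (Suc (Suc n)) \<sigma> h - horizon_payoff m (Suc n) \<sigma> h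
      = beta * (\<Sum>y\<in>UNIV. ?D y * trans_prob (last h) (\<sigma> h) m y)"
    by (simp only: horizon_payoff_Suc[OF assms(1) Suc.prems assms(3)])
      (simp add: algebra_simps sum_subtractf)
  moreover have "\<bar>\<Sum>y\<in>UNIV. ?D y * trans_prob (last h) (\<sigma> h) m y\<bar> \<le> payoff_bound * beta ^ n"
    by (intro abs_sum_mult_trans_prob_le[OF a_in_A assms(3)] Suc.IH) simp
  ultimately show ?case
    using beta(1) by (simp add: abs_mult mult_ac)
qed

definition total_payoff :: "real \<Rightarrow> ('x list \<Rightarrow> 'a) \<Rightarrow> 'x list \<Rightarrow> real" where
  "total_payoff m \<sigma> h = lim (\<lambda>n. horizon_payoff m n \<sigma> h)"

lemma horizon_payoff_tendsto:
  assumes "feasible_policy \<Gamma> \<sigma>" "h \<noteq> []" "m \<in> {a..b}"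
  shows "(\<lambda>n. horizon_payoff m n \<sigma> h) \<longlonglongrightarrow> total_payoff m \<sigma> h"
  unfolding total_payoff_def convergent_LIMSEQ_iff[symmetric]
  using abs_horizon_payoff_Suc_diff_le[OF assms] beta by (intro convergent_if_abs_diff_le_geometric) auto

lemma abs_total_payoff_le:
  assumes "feasible_policy \<Gamma> \<sigma>" "h \<noteq> []" "m \<in> {a..b}"
  shows "\<bar>total_payoff m \<sigma> h\<bar> \<le> payoff_bound / (1 - beta)"
  by (rule LIMSEQ_le_const2[OF tendsto_rabs[OF horizon_payoff_tendsto[OF assms]]])
    (use abs_horizon_payoff_le[OF assms] in auto)

definition primitives_close :: "real \<Rightarrow> real \<Rightarrow> real \<Rightarrow> bool" where
  "primitives_close \<epsilon> m m' \<longleftrightarrow> (\<forall>x y. \<forall>a'\<in>\<Gamma> x.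
     \<bar>payoff x a' m - payoff x a' m'\<bar> \<le> \<epsilon> \<and> \<bar>trans_prob x a' m y - trans_prob x a' m' y\<bar> \<le> \<epsilon>)"

text \<open>The constant C solves C = 1 + beta (C + CARD('x) payoff_bound / (1 - beta)): this is the
  recursion obeyed by the bound on the n-period payoff difference when payoffs and transition
  probabilities move by at most 1.\<close>
definition perturbation_const :: real where
  "perturbation_const = (1 + beta * real CARD('x) * (payoff_bound / (1 - beta))) / (1 - beta)"

lemma perturbation_const_pos: "0 < perturbation_const"
  unfolding perturbation_const_def using beta payoff_bound_nonneg
  by (intro divide_pos_pos add_pos_nonneg) auto

lemma abs_sum_horizon_payoff_mult_trans_prob_diff_le:
  assumes close: "primitives_close \<epsilon> m m'" and m': "m' \<in> {a..b}"
    and \<sigma>: "feasible_policy \<Gamma> \<sigma>" and "a' \<in> \<Gamma> x"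
  shows "\<bar>\<Sum>y\<in>UNIV. horizon_payoff m' n \<sigma> (h @ [y]) * (trans_prob x a' m y - trans_prob x a' m' y)\<bar>
      \<le> real CARD('x) * (payoff_bound / (1 - beta)) * \<epsilon>"
proof -
  let ?t = "\<lambda>y. horizon_payoff m' n \<sigma> (h @ [y]) * (trans_prob x a' m y - trans_prob x a' m' y)"
  have term_le: "\<bar>?t y\<bar> \<le> payoff_bound / (1 - beta) * \<epsilon>" for y
    using abs_horizon_payoff_le[OF \<sigma> _ m', of "h @ [y]" n] close \<open>a' \<in> \<Gamma> x\<close>
    unfolding abs_mult primitives_close_def by (intro mult_mono) auto
  have "\<bar>\<Sum>y\<in>UNIV. ?t y\<bar> \<le> (\<Sum>y\<in>UNIV. \<bar>?t y\<bar>)"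
    by (rule sum_abs)
  also have "\<dots> \<le> of_nat (card (UNIV :: 'x set)) * (payoff_bound / (1 - beta) * \<epsilon>)"
    using term_le by (rule sum_bounded_above)
  finally show ?thesis
    by (simp add: mult_ac)
qed

lemma abs_horizon_payoff_diff_le:
  assumes close: "primitives_close \<epsilon> m m'" and "0 \<le> \<epsilon>" and m: "m \<in> {a..b}" "m' \<in> {a..b}"
    and \<sigma>: "feasible_policy \<Gamma> \<sigma>" and "h \<noteq> []"
  shows "\<bar>horizon_payoff m n \<sigma> h - horizon_payoff m' n \<sigma> h\<bar> \<le> \<epsilon> * perturbation_const"
  using \<open>h \<noteq> []\<close>
proof (induction n arbitrary: h)
  case 0
  show ?case
    using \<open>0 \<le> \<epsilon>\<close> perturbation_const_pos by simp
next
  case (Suc n)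
  let ?x = "last h" and ?a = "\<sigma> h"
  let ?J = "\<lambda>m y. horizon_payoff m n \<sigma> (h @ [y])"
  have a_in_\<Gamma>: "?a \<in> \<Gamma> ?x"
    using \<sigma> Suc.prems by (simp add: feasible_policy_def)
  have a_in_A: "?a \<in> A"
    using feasible_action_in_A[OF \<sigma> Suc.prems] .
  have split: "horizon_payoff m (Suc n) \<sigma> h - horizon_payoff m' (Suc n) \<sigma> h
      = (payoff ?x ?a m - payoff ?x ?a m')
        + beta * ((\<Sum>y\<in>UNIV. (?J m y - ?J m' y) * trans_prob ?x ?a m y)
                  + (\<Sum>y\<in>UNIV. ?J m' y * (trans_prob ?x ?a m y - trans_prob ?x ?a m' y)))"
    by (simp only: horizon_payoff_Suc[OF \<sigma> Suc.prems m(1)] horizon_payoff_Suc[OF \<sigma> Suc.prems m(2)])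
      (simp add: algebra_simps sum_subtractf sum.distrib)
  have payoff_close: "\<bar>payoff ?x ?a m - payoff ?x ?a m'\<bar> \<le> \<epsilon>"
    using close a_in_\<Gamma> by (simp add: primitives_close_def)
  have "\<bar>\<Sum>y\<in>UNIV. (?J m y - ?J m' y) * trans_prob ?x ?a m y\<bar> \<le> \<epsilon> * perturbation_const"
    by (intro abs_sum_mult_trans_prob_le[OF a_in_A m(1)] Suc.IH) simp
  moreover have "\<bar>\<Sum>y\<in>UNIV. ?J m' y * (trans_prob ?x ?a m y - trans_prob ?x ?a m' y)\<bar>
      \<le> real CARD('x) * (payoff_bound / (1 - beta)) * \<epsilon>"
    using a_in_\<Gamma> by (intro abs_sum_horizon_payoff_mult_trans_prob_diff_le[OF close m(2) \<sigma>])
  ultimately have "\<bar>(\<Sum>y\<in>UNIV. (?J m y - ?J m' y) * trans_prob ?x ?a m y)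
        + (\<Sum>y\<in>UNIV. ?J m' y * (trans_prob ?x ?a m y - trans_prob ?x ?a m' y))\<bar>
      \<le> \<epsilon> * perturbation_const + real CARD('x) * (payoff_bound / (1 - beta)) * \<epsilon>"
    by (intro order_trans[OF abs_triangle_ineq add_mono])
  then have "\<bar>horizon_payoff m (Suc n) \<sigma> h - horizon_payoff m' (Suc n) \<sigma> h\<bar>
      \<le> \<epsilon> + beta * (\<epsilon> * perturbation_const + real CARD('x) * (payoff_bound / (1 - beta)) * \<epsilon>)"
    unfolding split using payoff_close beta(1)
    by (intro order_trans[OF abs_triangle_ineq add_mono]) (simp_all add: abs_mult mult_left_mono)
  also have "\<dots> = \<epsilon> * perturbation_const"
  proof -
    have fixed_point: "C * (1 - beta) = 1 + beta * X \<Longrightarrow> \<epsilon> + beta * (\<epsilon> * C + X * \<epsilon>) = \<epsilon> * C"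
      for C X
      by algebra
    show ?thesis
      by (rule fixed_point) (use beta in \<open>simp add: perturbation_const_def\<close>)
  qed
  finally show ?case .
qed

lemma abs_total_payoff_diff_le:
  assumes "primitives_close \<epsilon> m m'" "0 \<le> \<epsilon>" "m \<in> {a..b}" "m' \<in> {a..b}"
    and "feasible_policy \<Gamma> \<sigma>" "h \<noteq> []"
  shows "\<bar>total_payoff m \<sigma> h - total_payoff m' \<sigma> h\<bar> \<le> \<epsilon> * perturbation_const"
  by (rule LIMSEQ_le_const2[OF tendsto_rabs[OF tendsto_diff[OF horizon_payoff_tendsto horizon_payoff_tendsto]]])
    (use assms abs_horizon_payoff_diff_le[OF assms] in auto)

abbreviation Val :: "'x \<Rightarrow> real \<Rightarrow> real" where
  "Val x m \<equiv> V payoff w q beta \<Gamma> x m"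

lemma Val_eq_SUP: "Val x m = (SUP \<sigma>\<in>{\<sigma>. feasible_policy \<Gamma> \<sigma>}. total_payoff m \<sigma> [x])"
  by (simp add: V_def total_payoff_def)

lemma abs_Val_diff_le:
  assumes "primitives_close \<epsilon> m m'" "0 \<le> \<epsilon>" "m \<in> {a..b}" "m' \<in> {a..b}"
  shows "\<bar>Val x m - Val x m'\<bar> \<le> \<epsilon> * perturbation_const"
proof -
  have bdd: "bdd_above ((\<lambda>\<sigma>. total_payoff m'' \<sigma> [x]) ` {\<sigma>. feasible_policy \<Gamma> \<sigma>})"
    if "m'' \<in> {a..b}" for m''
    using abs_total_payoff_le that
    by (auto intro!: bdd_aboveI[where M="payoff_bound / (1 - beta)"] simp: abs_le_iff)
  show ?thesis
    unfolding Val_eq_SUP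
    by (rule abs_SUP_diff_le) (use assms bdd feasible_policy_exists abs_total_payoff_diff_le in auto)
qed

lemma primitives_close_if_near:
  assumes "0 < \<epsilon>"
  shows "\<exists>\<delta>>0. \<forall>m\<in>{a..b}. \<forall>m'\<in>{a..b}. \<bar>m - m'\<bar> < \<delta> \<longrightarrow> primitives_close \<epsilon> m m'"
proof -
  define f where "f i p = (payoff (fst i) (fst p) (snd p), trans_prob (fst i) (fst p) (snd p) (snd i))"
    for i :: "'x \<times> 'x" and p
  have f_cont: "continuous_on (\<Gamma> (fst i) \<times> {a..b}) (f i)" for i
  proof -
    have sub: "\<Gamma> (fst i) \<times> {a..b} \<subseteq> A \<times> {a..b}"
      using Gamma by auto
    show ?thesis
      unfolding f_def
      using continuous_on_subset[OF pi_cont[rule_format, unfolded case_prod_beta] sub]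
        continuous_on_subset[OF continuous_on_trans_prob[unfolded case_prod_beta] sub]
      by (rule continuous_on_Pair)
  qed
  then obtain \<delta> where "\<delta> > 0" and \<delta>: "\<forall>i. \<forall>a'\<in>\<Gamma> (fst i). \<forall>m\<in>{a..b}. \<forall>m'\<in>{a..b}.
      dist m m' < \<delta> \<longrightarrow> dist (f i (a', m)) (f i (a', m')) < \<epsilon>"
    using uniformly_equicontinuous_finite_family[of "\<lambda>i. \<Gamma> (fst i)" "{a..b}" f \<epsilon>, OF _ compact_Icc f_cont assms]
      Gamma by blast
  have "primitives_close \<epsilon> m m'" if "m \<in> {a..b}" "m' \<in> {a..b}" "\<bar>m - m'\<bar> < \<delta>" for m m'
    unfolding primitives_close_def
  proof (intro allI ballI)
    fix x y a' assume "a' \<in> \<Gamma> x"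
    then have "dist (f (x, y) (a', m)) (f (x, y) (a', m')) < \<epsilon>"
      using \<delta> that by (auto simp: dist_real_def)
    then have "dist (fst (f (x, y) (a', m))) (fst (f (x, y) (a', m'))) < \<epsilon>"
      and "dist (snd (f (x, y) (a', m))) (snd (f (x, y) (a', m'))) < \<epsilon>"
      by (auto intro: le_less_trans[OF dist_fst_le] le_less_trans[OF dist_snd_le])
    then show "\<bar>payoff x a' m - payoff x a' m'\<bar> \<le> \<epsilon> \<and> \<bar>trans_prob x a' m y - trans_prob x a' m' y\<bar> \<le> \<epsilon>"
      by (simp add: f_def dist_real_def)
  qed
  then show ?thesis
    using \<open>\<delta> > 0\<close> by blast
qed

lemma continuous_on_Val: "continuous_on {a..b} (Val x)"
  unfolding continuous_on_iff
proof (intro ballI allI impI)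
  fix m e :: real assume m: "m \<in> {a..b}" and "0 < e"
  define \<epsilon> where "\<epsilon> = e / (2 * perturbation_const)"
  have "0 < \<epsilon>"
    using \<open>0 < e\<close> perturbation_const_pos by (simp add: \<epsilon>_def)
  then obtain \<delta> where "\<delta> > 0" and \<delta>: "\<And>m m'. m \<in> {a..b} \<Longrightarrow> m' \<in> {a..b} \<Longrightarrow> \<bar>m - m'\<bar> < \<delta> \<Longrightarrow> primitives_close \<epsilon> m m'"
    using primitives_close_if_near by blast
  have "dist (Val x m') (Val x m) < e" if "m' \<in> {a..b}" "dist m' m < \<delta>" for m'
  proof -
    have "\<bar>Val x m' - Val x m\<bar> \<le> \<epsilon> * perturbation_const"
      using that m \<open>0 < \<epsilon>\<close> by (intro abs_Val_diff_le \<delta>) (auto simp: dist_real_def)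
    also have "\<dots> < e"
      using \<open>0 < e\<close> perturbation_const_pos by (simp add: \<epsilon>_def)
    finally show ?thesis
      by (simp add: dist_real_def)
  qed
  then show "\<exists>\<delta>>0. \<forall>m'\<in>{a..b}. dist m' m < \<delta> \<longrightarrow> dist (Val x m') (Val x m) < e"
    using \<open>\<delta> > 0\<close> by blast
qed

end

section \<open>Continuity of the policy and existence of the equilibrium\<close>

locale scalar_mean_field_game = discounted_control A a b q w \<Gamma> payoff beta
  for A :: "'a::euclidean_space set"
    and a b :: real
    and q :: "'e::metric_space measure"
    and w :: "'x::finite \<Rightarrow> 'a \<Rightarrow> real \<Rightarrow> 'e \<Rightarrow> 'x"
    and \<Gamma> :: "'x \<Rightarrow> 'a set"
    and payoff :: "'x \<Rightarrow> 'a \<Rightarrow> real \<Rightarrow> real"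
    and beta :: real +
  fixes g :: "'x \<Rightarrow> real \<Rightarrow> 'a"
    and M :: "real^'x \<Rightarrow> real"
  assumes ab: "a < b"
    and single_valued: "\<forall>m\<in>{a..b}. \<forall>x. G payoff w q beta \<Gamma> x m = {g x m}"
    and M_cont: "continuous_on pop_states M"
    and M_range: "M ` pop_states \<subseteq> {a..b}"
    and irred: "\<forall>m\<in>{a..b}. irreducible (L w q g m)"
begin

definition action_value :: "'x \<Rightarrow> 'a \<Rightarrow> real \<Rightarrow> real" where
  "action_value x a' m = payoff x a' m + beta * (\<Sum>y\<in>UNIV. Val y m * trans_prob x a' m y)"

lemma G_eq_argmax:
  assumes "m \<in> {a..b}"
  shows "G payoff w q beta \<Gamma> x m = {a'\<in>\<Gamma> x. \<forall>b'\<in>\<Gamma> x. action_value x b' m \<le> action_value x a' m}"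
proof -
  have "payoff x a' m + beta * (\<integral>\<zeta>. Val (w x a' m \<zeta>) m \<partial>q) = action_value x a' m" if "a' \<in> \<Gamma> x" for a'
    using that Gamma integral_w_eq_sum[OF _ assms, of a' "\<lambda>y. Val y m" x]
    by (auto simp: action_value_def)
  then show ?thesis
    unfolding G_def Let_def by (intro Collect_cong conj_cong refl) (auto simp: Ball_def)
qed

lemma continuous_on_action_value: "continuous_on (\<Gamma> x \<times> {a..b}) (\<lambda>(a', m). action_value x a' m)"
proof -
  have sub: "\<Gamma> x \<times> {a..b} \<subseteq> A \<times> {a..b}"
    using Gamma by auto
  have "continuous_on (\<Gamma> x \<times> {a..b}) (\<lambda>p. Val y (snd p))" for y
    by (rule continuous_on_compose2[OF continuous_on_Val continuous_on_snd[OF continuous_on_id]]) auto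
  then show ?thesis
    unfolding action_value_def case_prod_beta
    using continuous_on_subset[OF pi_cont[rule_format, unfolded case_prod_beta] sub]
      continuous_on_subset[OF continuous_on_trans_prob[unfolded case_prod_beta] sub]
    by (intro continuous_intros) auto
qed

lemma policy_feasible: "m \<in> {a..b} \<Longrightarrow> g x m \<in> \<Gamma> x"
  using single_valued G_eq_argmax by blast

lemma policy_in_A: "m \<in> {a..b} \<Longrightarrow> g x m \<in> A"
  using policy_feasible Gamma by blast

lemma continuous_on_policy: "continuous_on {a..b} (g x)"
proof (rule continuous_on_unique_maximizer[OF _ closed_atLeastAtMost continuous_on_action_value])
  show "compact (\<Gamma> x)"
    using Gamma by blast
  show "g x \<in> {a..b} \<rightarrow> \<Gamma> x"
    using policy_feasible by blast
  show "(\<forall>c'\<in>\<Gamma> x. (\<lambda>(a', m). action_value x a' m) (c', m) \<le> (\<lambda>(a', m). action_value x a' m) (c, m))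
      \<longleftrightarrow> c = g x m" if "m \<in> {a..b}" "c \<in> \<Gamma> x" for m c
    using that single_valued G_eq_argmax[OF that(1), of x] by auto
qed

lemma L_eq_trans_prob: "L w q g m x y = trans_prob x (g x m) m y"
  by (simp add: L_def trans_prob_def)

lemma continuous_on_L: "continuous_on {a..b} (\<lambda>m. L w q g m x y)"
  unfolding L_eq_trans_prob
  using policy_in_A
  by (intro continuous_on_compose2[OF continuous_on_trans_prob, where f="\<lambda>m. (g x m, m)", simplified]
      continuous_intros continuous_on_policy) auto

lemma stochastic_L: "m \<in> {a..b} \<Longrightarrow> stochastic (L w q g m)"
  by (auto simp: stochastic_def L_eq_trans_prob trans_prob_nonneg intro!: sum_trans_prob policy_in_A)

lemma stationary:
  "m \<in> {a..b} \<Longrightarrow> prob_vec (inv_dist (L w q g m)) \<and> invariant (L w q g m) (inv_dist (L w q g m))"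
  using inv_dist(1)[OF stochastic_L] irred by blast

lemma continuous_on_stationary: "continuous_on {a..b} (\<lambda>m. inv_dist (L w q g m))"
  using continuous_on_L stochastic_L irred by (intro continuous_on_inv_dist) auto

theorem bisection_converges_to_MFE:
  defines "f \<equiv> \<lambda>m. m - M (inv_dist (L w q g m))"
  shows "\<exists>m\<^sub>s\<in>{a..b}. midpt f a b \<longlonglongrightarrow> m\<^sub>s \<and> f m\<^sub>s = 0
           \<and> is_MFE payoff w q beta \<Gamma> M (\<lambda>x _. g x m\<^sub>s) (inv_dist (L w q g m\<^sub>s))"
proof -
  have M_in: "M (inv_dist (L w q g m)) \<in> {a..b}" if "m \<in> {a..b}" for m
    using M_range stationary[OF that] unfolding pop_states_def by blast
  have "continuous_on {a..b} f"
    unfolding f_def using stationary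
    by (intro continuous_intros continuous_on_compose2[OF M_cont continuous_on_stationary])
      (auto simp: pop_states_def)
  moreover have "f a \<le> 0" "0 \<le> f b"
    using M_in[of a] M_in[of b] ab by (auto simp: f_def)
  ultimately obtain m\<^sub>s where m\<^sub>s: "m\<^sub>s \<in> {a..b}" "midpt f a b \<longlonglongrightarrow> m\<^sub>s" "f m\<^sub>s = 0"
    using bisect_midpt_tendsto_root ab by (metis less_imp_le)
  then have fixed: "M (inv_dist (L w q g m\<^sub>s)) = m\<^sub>s"
    by (simp add: f_def)
  have L_frozen: "L w q (\<lambda>x _. g x m\<^sub>s) m\<^sub>s = L w q g m\<^sub>s"
    by (intro ext) (simp add: L_def)
  have "is_MFE payoff w q beta \<Gamma> M (\<lambda>x _. g x m\<^sub>s) (inv_dist (L w q g m\<^sub>s))"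
    unfolding is_MFE_def fixed L_frozen
    using stationary[OF m\<^sub>s(1)] single_valued m\<^sub>s(1) unfolding invariant_def by blast
  then show ?thesis
    using m\<^sub>s by blast
qed

end

theorem theorem1:
  fixes A :: "'a::euclidean_space set"
    and \<Gamma> :: "'x::finite \<Rightarrow> 'a set"
    and M :: "real^'x \<Rightarrow> real"
    and a b :: real
    and q :: "'e::metric_space measure"
    and w :: "'x \<Rightarrow> 'a \<Rightarrow> real \<Rightarrow> 'e \<Rightarrow> 'x"
    and payoff :: "'x \<Rightarrow> 'a \<Rightarrow> real \<Rightarrow> real"
    and beta :: real
    and g :: "'x \<Rightarrow> real \<Rightarrow> 'a"
  assumes ab: "a < b"
    and Gamma: "\<forall>x. \<Gamma> x \<noteq> {} \<and> compact (\<Gamma> x) \<and> \<Gamma> x \<subseteq> A"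
    and M_cont: "continuous_on pop_states M"
    and M_range: "M ` pop_states \<subseteq> {a..b}"
    and q_prob: "prob_space q"
    and q_sets: "sets q = sets borel"
    and E_compact: "compact (UNIV :: 'e set)"
    and w_cont: "\<forall>x. continuous_map (top_of_set (A \<times> {a..b} \<times> UNIV)) (discrete_topology UNIV)
                        (\<lambda>(a', m, \<zeta>). w x a' m \<zeta>)"
    and pi_bounded: "\<exists>B. \<forall>x a' m. a' \<in> A \<longrightarrow> m \<in> {a..b} \<longrightarrow> \<bar>payoff x a' m\<bar> \<le> B"
    and pi_cont: "\<forall>x. continuous_on (A \<times> {a..b}) (\<lambda>(a', m). payoff x a' m)"
    and beta: "0 < beta" "beta < 1"
    and single_valued: "\<forall>m\<in>{a..b}. \<forall>x. G payoff w q beta \<Gamma> x m = {g x m}"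
    and irred: "\<forall>m\<in>{a..b}. irreducible (L w q g m)"
    and aper: "\<forall>m\<in>{a..b}. aperiodic (L w q g m)"
  shows "let f = (\<lambda>m. m - M (inv_dist (L w q g m))) in
         \<exists>m\<^sub>s\<in>{a..b}. midpt f a b \<longlonglongrightarrow> m\<^sub>s \<and> f m\<^sub>s = 0
             \<and> is_MFE payoff w q beta \<Gamma> M (\<lambda>x _. g x m\<^sub>s) (inv_dist (L w q g m\<^sub>s))"
proof -
  interpret scalar_mean_field_game A a b q w \<Gamma> payoff beta g M
    unfolding scalar_mean_field_game_def scalar_mean_field_game_axioms_def discounted_control_def
      discounted_control_axioms_def finite_noise_dynamics_def
    using ab Gamma q_prob q_sets w_cont pi_bounded pi_cont beta single_valued M_cont M_range irred
    by blast
  show ?thesis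
    unfolding Let_def by (rule bisection_converges_to_MFE)
qed

end
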